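(* Let $B$ be a finite skew brace with $(B,+)$ abelian such that $\Lambda(B)$ has exactly one vertex. Then $B$ is isomorphic to one of: (1) $\mathbb{Z}/4\mathbb{Z}$ with its usual addition and $x\circ y=x+y+2xy$; (2) $\mathbb{Z}/2\mathbb{Z}\times\mathbb{Z}/2\mathbb{Z}$ with componentwise addition and $(x_1,y_1)\circ(x_2,y_2)=(x_1+x_2+y_1y_2,\,y_1+y_2)$; (3) $\mathbb{Z}/2\mathbb{Z}\times\mathbb{Z}/4\mathbb{Z}$ with componentwise addition and $(x_1,y_1)\circ(x_2,y_2)=\big(x_1+x_2+\varepsilon(y_1)y_2,\,y_1+y_2+2y_1y_2\big)$, where $\varepsilon(y_1)=0$ if $y_1\in\{0,1\}$ and $\varepsilon(y_1)=1$ if $y_1\in\{2,3\}$ (i.e. $\varepsilon(y_1)=\sum_{i=1}^{y_1-1}i \bmod 2$ for the representative $y_1\in\{0,1,2,3\}$), and $\varepsilon(y_1)y_2$ is computed in $\mathbb{Z}/2\mathbb{Z}$.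
   Context: A skew brace is a triple $(A,+,\circ)$ where $(A,+)$ and $(A,\circ)$ are groups with $a\circ(b+c)=a\circ b-a+a\circ c$. $\lambda_a(b)=-a+a\circ b$ defines an action of $(A,\circ)$ on $(A,+)$ by automorphisms. $\Lambda(A)$ is the graph whose vertices are the $\lambda$-orbits of size $>1$, two distinct vertices $L_1,L_2$ adjacent iff $\gcd(|L_1|,|L_2|)\ne1$. *)

theory Defs
  imports "HOL-Algebra.Group"
begin

text \<open>A skew brace (A,+,o) is given by two group structures P = (A,+) and M = (A,o)
  on the same carrier (written multiplicatively in HOL-Algebra).\<close>

definition skew_brace :: "'a monoid \<Rightarrow> 'a monoid \<Rightarrow> bool" where
  "skew_brace P M \<longleftrightarrow> group P \<and> group M \<and> carrier P = carrier M \<and>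
     (\<forall>a\<in>carrier P. \<forall>b\<in>carrier P. \<forall>c\<in>carrier P.
        a \<otimes>\<^bsub>M\<^esub> (b \<otimes>\<^bsub>P\<^esub> c)
          = (a \<otimes>\<^bsub>M\<^esub> b) \<otimes>\<^bsub>P\<^esub> inv\<^bsub>P\<^esub> a \<otimes>\<^bsub>P\<^esub> (a \<otimes>\<^bsub>M\<^esub> c))"

definition brace_lambda :: "'a monoid \<Rightarrow> 'a monoid \<Rightarrow> 'a \<Rightarrow> 'a \<Rightarrow> 'a" where
  "brace_lambda P M a b = inv\<^bsub>P\<^esub> a \<otimes>\<^bsub>P\<^esub> (a \<otimes>\<^bsub>M\<^esub> b)"

definition lambda_orbit :: "'a monoid \<Rightarrow> 'a monoid \<Rightarrow> 'a \<Rightarrow> 'a set" where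
  "lambda_orbit P M b = (\<lambda>a. brace_lambda P M a b) ` carrier M"

definition Lambda_vertices :: "'a monoid \<Rightarrow> 'a monoid \<Rightarrow> 'a set set" where
  "Lambda_vertices P M = {L. (\<exists>b\<in>carrier P. L = lambda_orbit P M b) \<and> card L > 1}"

definition Lambda_adj :: "'a monoid \<Rightarrow> 'a monoid \<Rightarrow> 'a set \<Rightarrow> 'a set \<Rightarrow> bool" where
  "Lambda_adj P M L1 L2 \<longleftrightarrow> L1 \<in> Lambda_vertices P M \<and> L2 \<in> Lambda_vertices P M \<and>
     L1 \<noteq> L2 \<and> gcd (card L1) (card L2) \<noteq> 1"

definition brace_iso :: "'a monoid \<Rightarrow> 'a monoid \<Rightarrow> 'b monoid \<Rightarrow> 'b monoid \<Rightarrow> bool" where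
  "brace_iso P M P' M' \<longleftrightarrow> (\<exists>f. bij_betw f (carrier P) (carrier P') \<and>
     (\<forall>x\<in>carrier P. \<forall>y\<in>carrier P.
        f (x \<otimes>\<^bsub>P\<^esub> y) = f x \<otimes>\<^bsub>P'\<^esub> f y \<and> f (x \<otimes>\<^bsub>M\<^esub> y) = f x \<otimes>\<^bsub>M'\<^esub> f y))"

definition B1_add :: "int monoid" where
  "B1_add = \<lparr>carrier = {0..3}, mult = (\<lambda>x y. (x + y) mod 4), one = 0\<rparr>"
definition B1_circ :: "int monoid" where
  "B1_circ = \<lparr>carrier = {0..3}, mult = (\<lambda>x y. (x + y + 2*x*y) mod 4), one = 0\<rparr>"

definition B2_add :: "(int \<times> int) monoid" where
  "B2_add = \<lparr>carrier = {0..1} \<times> {0..1},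
     mult = (\<lambda>(x1,y1) (x2,y2). ((x1 + x2) mod 2, (y1 + y2) mod 2)), one = (0,0)\<rparr>"
definition B2_circ :: "(int \<times> int) monoid" where
  "B2_circ = \<lparr>carrier = {0..1} \<times> {0..1},
     mult = (\<lambda>(x1,y1) (x2,y2). ((x1 + x2 + y1*y2) mod 2, (y1 + y2) mod 2)), one = (0,0)\<rparr>"

definition eps4 :: "int \<Rightarrow> int" where
  "eps4 y = (if y \<in> {2,3} then 1 else 0)"
definition B3_add :: "(int \<times> int) monoid" where
  "B3_add = \<lparr>carrier = {0..1} \<times> {0..3},
     mult = (\<lambda>(x1,y1) (x2,y2). ((x1 + x2) mod 2, (y1 + y2) mod 4)), one = (0,0)\<rparr>"
definition B3_circ :: "(int \<times> int) monoid" where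
  "B3_circ = \<lparr>carrier = {0..1} \<times> {0..3},
     mult = (\<lambda>(x1,y1) (x2,y2). ((x1 + x2 + eps4 y1 * y2) mod 2, (y1 + y2 + 2*y1*y2) mod 4)),
     one = (0,0)\<rparr>"

end

theory Submission
  imports Defs "HOL-Algebra.Group_Action"
begin

text \<open>Let \<open>F\<close> be the set of \<open>\<lambda>\<close>-fixed points, an additive subgroup, and \<open>O\<close> its
  complement. \<open>O\<close> is a union of orbits of size \<open>> 1\<close>, so it is the single vertex of
  \<open>\<Lambda>(B)\<close>. Orbit-stabiliser gives \<open>|O| | |B|\<close> and Lagrange gives \<open>|F| | |B|\<close>; since
  \<open>|O| = |B| - |F|\<close> this forces \<open>[B : F] = 2\<close>, so \<open>O = x + F\<close> is a coset. Hence every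
  \<open>\<lambda>\<^sub>a\<close> translates \<open>O\<close> by some \<open>s(a) \<in> F\<close>, \<open>a \<circ> b = a + b + [b \<in> O] s(a)\<close>, and
  \<open>s : (B, \<circ>) \<rightarrow> (F, +)\<close> is a surjective homomorphism. From this, \<open>2F = 0\<close>, \<open>s \<circ> s = 0\<close>
  on \<open>F\<close>, and with \<open>v = s(x)\<close>, \<open>w = s(v)\<close> one gets \<open>F \<subseteq> {0, w, v, v + w}\<close> and
  \<open>s(2x) = w\<close>. If \<open>w = 0\<close> then \<open>F = {0, v}\<close> and \<open>2x \<in> {0, v}\<close> gives brace (2) or (1);
  if \<open>w \<noteq> 0\<close> then \<open>|F| = 4\<close> and \<open>x\<close> can be chosen with \<open>2x = s(x)\<close>, giving brace (3).\<close>

lemma brace_isoI_inverse: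
  fixes P M :: "'a monoid" and Q Qc :: "'b monoid" and g :: "'b \<Rightarrow> 'a"
  assumes bij: "bij_betw g (carrier Q) (carrier P)"
    and add: "\<And>p q. p \<in> carrier Q \<Longrightarrow> q \<in> carrier Q \<Longrightarrow>
       p \<otimes>\<^bsub>Q\<^esub> q \<in> carrier Q \<and> g (p \<otimes>\<^bsub>Q\<^esub> q) = g p \<otimes>\<^bsub>P\<^esub> g q"
    and circ: "\<And>p q. p \<in> carrier Q \<Longrightarrow> q \<in> carrier Q \<Longrightarrow>
       p \<otimes>\<^bsub>Qc\<^esub> q \<in> carrier Q \<and> g (p \<otimes>\<^bsub>Qc\<^esub> q) = g p \<otimes>\<^bsub>M\<^esub> g q"
  shows "brace_iso P M Q Qc"
proof -
  define f where "f = inv_into (carrier Q) g"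
  have f_bij: "bij_betw f (carrier P) (carrier Q)"
    unfolding f_def using bij by (rule bij_betw_inv_into)
  have f_in: "f x \<in> carrier Q" and g_f: "g (f x) = x" if "x \<in> carrier P" for x
    using that bij by (auto simp: f_def bij_betw_def inv_into_into f_inv_into_f)
  have f_g: "f (g p) = p" if "p \<in> carrier Q" for p
    using that bij by (simp add: f_def bij_betw_def inv_into_f_f)
  have "f (x \<otimes>\<^bsub>P\<^esub> y) = f x \<otimes>\<^bsub>Q\<^esub> f y \<and> f (x \<otimes>\<^bsub>M\<^esub> y) = f x \<otimes>\<^bsub>Qc\<^esub> f y"
    if "x \<in> carrier P" "y \<in> carrier P" for x y
    using add[OF f_in f_in] circ[OF f_in f_in] that by (metis g_f f_g)
  with f_bij show ?thesis unfolding brace_iso_def by blast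
qed

lemma double_of_dvd_complement:
  fixes n f :: nat
  assumes "f dvd n" "(n - f) dvd n" "0 < f" "f < n"
  shows "n = 2 * f"
proof -
  obtain k where k: "n = f * k" using assms(1) by blast
  with assms(3,4) have "2 \<le> k"
    by (metis One_nat_def less_2_cases mult.right_neutral mult_0_right not_le not_less_iff_gr_or_eq)
  hence "f \<le> n - f" using k by (metis add_le_imp_le_diff mult.commute mult_2 mult_le_mono1)
  moreover have "(n - f) dvd f"
    using assms(2,4) by (metis dvd_diff_nat dvd_refl diff_diff_cancel less_imp_le)
  ultimately show ?thesis
    using assms(3,4) by (metis dvd_imp_le le_antisym mult_2 le_add_diff_inverse2 less_imp_le)
qed

lemma int_atLeastAtMost_0_1: "{0..1::int} = {0, 1}"
  by auto

lemma int_atLeastAtMost_0_3: "{0..3::int} = {0, 1, 2, 3}"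
  by auto

locale skew_brace_pair =
  fixes P M :: "'a monoid"
  assumes skew_brace: "skew_brace P M"
begin

sublocale P: group P using skew_brace by (simp add: skew_brace_def)
sublocale M: group M using skew_brace by (simp add: skew_brace_def)

abbreviation A where "A \<equiv> carrier P"
abbreviation add (infixl "\<oplus>" 65) where "x \<oplus> y \<equiv> x \<otimes>\<^bsub>P\<^esub> y"
abbreviation circ (infixl "\<odot>" 70) where "x \<odot> y \<equiv> x \<otimes>\<^bsub>M\<^esub> y"
abbreviation neg ("\<ominus> _" [81] 80) where "\<ominus> x \<equiv> inv\<^bsub>P\<^esub> x"
abbreviation zero ("\<zero>") where "\<zero> \<equiv> \<one>\<^bsub>P\<^esub>"
abbreviation lam where "lam \<equiv> brace_lambda P M"

lemma carrier_M [simp]: "carrier M = A"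
  using skew_brace by (simp add: skew_brace_def)

lemma circ_add_distrib:
  "\<lbrakk>a \<in> A; b \<in> A; c \<in> A\<rbrakk> \<Longrightarrow> a \<odot> (b \<oplus> c) = (a \<odot> b) \<oplus> \<ominus>a \<oplus> (a \<odot> c)"
  using skew_brace by (simp add: skew_brace_def)

lemma add_neg_cancel_left [simp]: "a \<in> A \<Longrightarrow> b \<in> A \<Longrightarrow> a \<oplus> (\<ominus>a \<oplus> b) = b"
  by (simp add: P.m_assoc[symmetric])

lemma neg_add_cancel_left [simp]: "a \<in> A \<Longrightarrow> b \<in> A \<Longrightarrow> \<ominus>a \<oplus> (a \<oplus> b) = b"
  by (simp add: P.m_assoc[symmetric])

lemma circ_closed [simp]: "a \<in> A \<Longrightarrow> b \<in> A \<Longrightarrow> a \<odot> b \<in> A"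
  using M.m_closed by simp

lemma circ_inv_closed [simp]: "a \<in> A \<Longrightarrow> inv\<^bsub>M\<^esub> a \<in> A"
  using M.inv_closed by simp

lemma one_M [simp]: "\<one>\<^bsub>M\<^esub> = \<zero>"
proof -
  have one: "\<one>\<^bsub>M\<^esub> \<in> A" using M.one_closed by simp
  have "\<zero> = \<one>\<^bsub>M\<^esub> \<odot> (\<zero> \<oplus> \<zero>)" by simp
  also have "\<dots> = (\<one>\<^bsub>M\<^esub> \<odot> \<zero>) \<oplus> \<ominus>\<one>\<^bsub>M\<^esub> \<oplus> (\<one>\<^bsub>M\<^esub> \<odot> \<zero>)"
    using one by (simp only: circ_add_distrib P.one_closed)
  also have "\<dots> = \<ominus>\<one>\<^bsub>M\<^esub>" using one by simp
  finally show ?thesis using one by (metis P.inv_eq_1_iff)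
qed

lemma circ_zero [simp]: "a \<in> A \<Longrightarrow> a \<odot> \<zero> = a" "a \<in> A \<Longrightarrow> \<zero> \<odot> a = a"
  using M.r_one M.l_one by simp_all

lemma lam_def: "lam a b = \<ominus>a \<oplus> (a \<odot> b)"
  by (simp add: brace_lambda_def)

lemma lam_closed [simp]: "a \<in> A \<Longrightarrow> b \<in> A \<Longrightarrow> lam a b \<in> A"
  by (simp add: lam_def)

lemma circ_eq_add_lam: "a \<in> A \<Longrightarrow> b \<in> A \<Longrightarrow> a \<odot> b = a \<oplus> lam a b"
  by (simp add: lam_def)

lemma lam_zero [simp]: "b \<in> A \<Longrightarrow> lam \<zero> b = b" "a \<in> A \<Longrightarrow> lam a \<zero> = \<zero>"
  by (simp_all add: lam_def)

lemma lam_add: "\<lbrakk>a \<in> A; b \<in> A; c \<in> A\<rbrakk> \<Longrightarrow> lam a (b \<oplus> c) = lam a b \<oplus> lam a c"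
  by (simp add: lam_def circ_add_distrib P.m_assoc)

lemma lam_inv: "a \<in> A \<Longrightarrow> b \<in> A \<Longrightarrow> lam a (\<ominus>b) = \<ominus>(lam a b)"
  using lam_add[of a "\<ominus>b" b] by (simp add: P.inv_equality)

lemma lam_circ: "\<lbrakk>a \<in> A; b \<in> A; c \<in> A\<rbrakk> \<Longrightarrow> lam (a \<odot> b) c = lam a (lam b c)"
proof -
  assume a: "a \<in> A" and b: "b \<in> A" and c: "c \<in> A"
  have "lam a (lam b c) = lam a (\<ominus>b \<oplus> (b \<odot> c))"
    by (simp only: lam_def)
  also have "\<dots> = \<ominus>(lam a b) \<oplus> lam a (b \<odot> c)"
    using a b c by (simp add: lam_add lam_inv)
  also have "\<dots> = \<ominus>(a \<odot> b) \<oplus> a \<oplus> (\<ominus>a \<oplus> (a \<odot> (b \<odot> c)))"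
    using a b c by (simp add: lam_def P.inv_mult_group)
  also have "\<dots> = \<ominus>(a \<odot> b) \<oplus> (a \<odot> (b \<odot> c))"
    using a b c by (simp add: P.m_assoc)
  also have "\<dots> = lam (a \<odot> b) c"
    using a b c by (simp add: lam_def M.m_assoc)
  finally show ?thesis by simp
qed

lemma lam_inv_lam [simp]: "a \<in> A \<Longrightarrow> b \<in> A \<Longrightarrow> lam (inv\<^bsub>M\<^esub> a) (lam a b) = b"
  by (simp add: lam_circ[symmetric])

lemma lam_lam_inv [simp]: "a \<in> A \<Longrightarrow> b \<in> A \<Longrightarrow> lam a (lam (inv\<^bsub>M\<^esub> a) b) = b"
  by (simp add: lam_circ[symmetric])

lemma lambda_action: "group_action M A (\<lambda>a. restrict (lam a) A)"
proof -
  have bij: "restrict (lam a) A \<in> Bij A" if "a \<in> A" for a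
    unfolding Bij_def
    by (auto intro!: bij_betwI[where g = "lam (inv\<^bsub>M\<^esub> a)"] simp: that)
  have "restrict (lam (a \<odot> b)) A = restrict (lam a) A \<otimes>\<^bsub>BijGroup A\<^esub> restrict (lam b) A"
    if "a \<in> A" "b \<in> A" for a b
    using bij that by (auto simp: BijGroup_def compose_def lam_circ)
  hence "(\<lambda>a. restrict (lam a) A) \<in> hom M (BijGroup A)"
    using bij by (auto intro!: homI simp: BijGroup_def)
  thus ?thesis
    by (simp add: group_action_def group_hom_def group_hom_axioms_def group_BijGroup M.is_group)
qed

lemma lambda_orbit_eq: "lambda_orbit P M b = (\<lambda>a. lam a b) ` A"
  by (simp add: lambda_orbit_def)

lemma orbit_lambda_action: "b \<in> A \<Longrightarrow> orbit M (\<lambda>a. restrict (lam a) A) b = lambda_orbit P M b"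
  by (auto simp: orbit_def lambda_orbit_eq)

lemma self_in_lambda_orbit: "b \<in> A \<Longrightarrow> b \<in> lambda_orbit P M b"
  unfolding lambda_orbit_eq by (rule image_eqI[where x = "\<zero>"]) simp_all

definition lambda_fixed :: "'a set" where
  "lambda_fixed = {b \<in> A. \<forall>a\<in>A. lam a b = b}"

lemma lambda_fixed_subset_carrier: "lambda_fixed \<subseteq> A"
  by (auto simp: lambda_fixed_def)

lemma lambda_fixed_carrier: "f \<in> lambda_fixed \<Longrightarrow> f \<in> A"
  using lambda_fixed_subset_carrier by blast

lemma lam_lambda_fixed: "a \<in> A \<Longrightarrow> f \<in> lambda_fixed \<Longrightarrow> lam a f = f"
  by (simp add: lambda_fixed_def)

lemma lambda_fixed_subgroup: "subgroup lambda_fixed P"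
  by (rule P.subgroupI) (auto simp: lambda_fixed_def lam_add lam_inv)

lemma lam_in_lambda_fixed_iff:
  assumes a: "a \<in> A" and b: "b \<in> A"
  shows "lam a b \<in> lambda_fixed \<longleftrightarrow> b \<in> lambda_fixed"
proof
  assume fixed: "lam a b \<in> lambda_fixed"
  have lam_fix: "lam c (lam a b) = lam a b" if "c \<in> A" for c
    using fixed that by (simp add: lambda_fixed_def)
  have "lam a b = b"
    using lam_fix[of "inv\<^bsub>M\<^esub> a"] a b by simp
  moreover have "lam c b = lam a b" if "c \<in> A" for c
    using lam_fix[of "c \<odot> inv\<^bsub>M\<^esub> a"] a b that by (simp add: lam_circ)
  ultimately show "b \<in> lambda_fixed"
    using b by (simp add: lambda_fixed_def)
qed (use a in \<open>simp add: lambda_fixed_def\<close>)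

end

locale single_vertex_brace = skew_brace_pair +
  assumes comm_add: "comm_group P"
    and finite_carrier: "finite (carrier P)"
    and single_vertex: "card (Lambda_vertices P M) = 1"
begin

sublocale P: comm_group P by (rule comm_add)

definition lambda_moved :: "'a set" where
  "lambda_moved = A - lambda_fixed"

lemma lambda_moved_carrier: "x \<in> lambda_moved \<Longrightarrow> x \<in> A"
  by (simp add: lambda_moved_def)

lemma lambda_orbit_lambda_fixed: "b \<in> lambda_fixed \<Longrightarrow> lambda_orbit P M b = {b}"
  by (force simp: lambda_orbit_eq lam_lambda_fixed)

lemma lambda_orbit_subset_lambda_moved:
  "b \<in> lambda_moved \<Longrightarrow> lambda_orbit P M b \<subseteq> lambda_moved"
  by (auto simp: lambda_orbit_eq lambda_moved_def lam_in_lambda_fixed_iff)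

lemma card_lambda_orbit_lambda_moved:
  assumes "b \<in> lambda_moved"
  shows "1 < card (lambda_orbit P M b)"
proof -
  obtain a where a: "a \<in> A" "lam a b \<noteq> b" and b: "b \<in> A"
    using assms by (auto simp: lambda_moved_def lambda_fixed_def)
  have "card {b, lam a b} \<le> card (lambda_orbit P M b)"
    using a b self_in_lambda_orbit finite_carrier by (intro card_mono) (auto simp: lambda_orbit_eq)
  thus ?thesis using a by simp
qed

lemma lambda_orbit_lambda_moved:
  assumes "b \<in> lambda_moved"
  shows "lambda_orbit P M b = lambda_moved"
proof -
  obtain L where L: "Lambda_vertices P M = {L}"
    using single_vertex by (rule card_1_singletonE)
  have orbit_L: "lambda_orbit P M c = L" if "c \<in> lambda_moved" for c
    using L that card_lambda_orbit_lambda_moved[OF that] lambda_moved_carrier[OF that]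
    by (auto simp: Lambda_vertices_def)
  have "lambda_moved \<subseteq> L"
    using orbit_L self_in_lambda_orbit lambda_moved_carrier by blast
  thus ?thesis
    using orbit_L[OF assms] lambda_orbit_subset_lambda_moved[OF assms] by blast
qed

lemma lambda_moved_nonempty: "lambda_moved \<noteq> {}"
proof -
  obtain L where "Lambda_vertices P M = {L}"
    using single_vertex by (rule card_1_singletonE)
  hence "L \<in> Lambda_vertices P M" by simp
  then obtain b where "b \<in> A" "1 < card (lambda_orbit P M b)"
    by (auto simp: Lambda_vertices_def)
  thus ?thesis
    using lambda_orbit_lambda_fixed by (auto simp: lambda_moved_def)
qed

definition base :: 'a where
  "base = (SOME x. x \<in> lambda_moved)"

lemma base_lambda_moved: "base \<in> lambda_moved"
  using lambda_moved_nonempty by (simp add: base_def some_in_eq)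

lemma base_carrier [simp]: "base \<in> A"
  using base_lambda_moved lambda_moved_carrier by blast

lemma card_carrier_eq: "card A = 2 * card lambda_fixed"
proof (rule double_of_dvd_complement)
  interpret lambda: group_action M A "\<lambda>a. restrict (lam a) A"
    by (rule lambda_action)
  have "card lambda_moved * card (stabilizer M (\<lambda>a. restrict (lam a) A) base) = card A"
    using lambda.orbit_stabilizer_theorem[OF base_carrier]
    by (simp add: orbit_lambda_action lambda_orbit_lambda_moved[OF base_lambda_moved] order_def)
  moreover have "card lambda_moved = card A - card lambda_fixed"
    using finite_carrier lambda_fixed_subset_carrier
    by (simp add: lambda_moved_def card_Diff_subset finite_subset)
  ultimately show "(card A - card lambda_fixed) dvd card A"
    by (metis dvd_triv_left)
  show "card lambda_fixed dvd card A"
    using P.lagrange[OF lambda_fixed_subgroup] by (metis dvd_triv_right order_def)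
  have "finite lambda_fixed" "\<zero> \<in> lambda_fixed"
    using finite_carrier lambda_fixed_subset_carrier by (auto simp: lambda_fixed_def finite_subset)
  thus "0 < card lambda_fixed" by (auto simp: card_gt_0_iff)
  show "card lambda_fixed < card A"
    using finite_carrier lambda_fixed_subset_carrier base_lambda_moved
    by (metis Diff_iff lambda_moved_def psubsetI psubset_card_mono)
qed

lemma card_lambda_moved_eq: "card lambda_moved = card lambda_fixed"
  using card_carrier_eq finite_carrier lambda_fixed_subset_carrier
  by (simp add: lambda_moved_def card_Diff_subset finite_subset)

lemma lambda_moved_add_fixed:
  assumes x: "x \<in> lambda_moved" and f: "f \<in> lambda_fixed"
  shows "x \<oplus> f \<in> lambda_moved"
proof -
  have xA: "x \<in> A" and fA: "f \<in> A"
    using x f lambda_moved_carrier lambda_fixed_carrier by auto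
  have "x \<oplus> f \<notin> lambda_fixed"
  proof
    assume "x \<oplus> f \<in> lambda_fixed"
    hence "x \<oplus> f \<oplus> \<ominus>f \<in> lambda_fixed"
      using f subgroup.m_closed[OF lambda_fixed_subgroup] subgroup.m_inv_closed[OF lambda_fixed_subgroup]
      by blast
    thus False using x xA fA by (simp add: P.m_assoc lambda_moved_def)
  qed
  thus ?thesis using xA fA by (simp add: lambda_moved_def)
qed

lemma lambda_moved_eq_coset:
  assumes x: "x \<in> lambda_moved"
  shows "lambda_moved = (\<oplus>) x ` lambda_fixed"
proof (rule card_subset_eq[symmetric])
  show "finite lambda_moved"
    using finite_carrier by (simp add: lambda_moved_def)
  show "(\<oplus>) x ` lambda_fixed \<subseteq> lambda_moved"
    using x lambda_moved_add_fixed by blast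
  have "inj_on ((\<oplus>) x) lambda_fixed"
    unfolding inj_on_def using x by (metis lambda_fixed_carrier lambda_moved_carrier P.Units_l_cancel P.Units_eq)
  thus "card ((\<oplus>) x ` lambda_fixed) = card lambda_moved"
    by (simp add: card_image card_lambda_moved_eq)
qed

lemma carrier_eq_fixed_union_coset:
  "x \<in> lambda_moved \<Longrightarrow> A = lambda_fixed \<union> (\<oplus>) x ` lambda_fixed"
  using lambda_fixed_subset_carrier lambda_moved_eq_coset by (auto simp: lambda_moved_def)

lemma lambda_moved_cases:
  assumes "x \<in> lambda_moved" "a \<in> A"
  obtains (fixed) "a \<in> lambda_fixed" | (coset) f where "f \<in> lambda_fixed" "a = x \<oplus> f"
  using assms carrier_eq_fixed_union_coset by blast

lemma add_self_lambda_fixed: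
  assumes x: "x \<in> lambda_moved"
  shows "x \<oplus> x \<in> lambda_fixed"
proof (rule lambda_moved_cases[OF x, of "x \<oplus> x"])
  fix f assume f: "f \<in> lambda_fixed" and "x \<oplus> x = x \<oplus> f"
  hence "x = f" using x lambda_moved_carrier lambda_fixed_carrier by simp
  with x f show ?thesis by (simp add: lambda_moved_def)
qed (use x lambda_moved_carrier in simp_all)

definition shift :: "'a \<Rightarrow> 'a" where
  "shift a = \<ominus>base \<oplus> lam a base"

lemma shift_closed [simp]: "a \<in> A \<Longrightarrow> shift a \<in> A"
  by (simp add: shift_def)

lemma lam_base: "a \<in> A \<Longrightarrow> lam a base = base \<oplus> shift a"
  by (simp add: shift_def)

lemma shift_lambda_fixed: "a \<in> A \<Longrightarrow> shift a \<in> lambda_fixed"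
proof -
  assume a: "a \<in> A"
  have "lam a base \<in> lambda_moved"
    using a lambda_orbit_lambda_moved[OF base_lambda_moved] by (auto simp: lambda_orbit_eq)
  then obtain f where "f \<in> lambda_fixed" "lam a base = base \<oplus> f"
    using lambda_moved_eq_coset[OF base_lambda_moved] by blast
  thus ?thesis using lambda_fixed_carrier by (simp add: shift_def)
qed

lemma lam_lambda_moved:
  assumes a: "a \<in> A" and y: "y \<in> lambda_moved"
  shows "lam a y = y \<oplus> shift a"
proof -
  obtain f where f: "f \<in> lambda_fixed" and y_eq: "y = base \<oplus> f"
    using y lambda_moved_eq_coset[OF base_lambda_moved] by blast
  have "lam a y = base \<oplus> shift a \<oplus> f"
    using a f lambda_fixed_carrier by (simp add: y_eq lam_add lam_base lam_lambda_fixed)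
  thus ?thesis
    using a f lambda_fixed_carrier by (simp add: y_eq P.m_ac)
qed

lemma circ_lambda_fixed: "a \<in> A \<Longrightarrow> f \<in> lambda_fixed \<Longrightarrow> a \<odot> f = a \<oplus> f"
  by (simp add: circ_eq_add_lam lambda_fixed_carrier lam_lambda_fixed)

lemma circ_lambda_moved: "a \<in> A \<Longrightarrow> y \<in> lambda_moved \<Longrightarrow> a \<odot> y = a \<oplus> y \<oplus> shift a"
  by (simp add: circ_eq_add_lam lambda_moved_carrier lam_lambda_moved P.m_assoc)

lemma shift_circ:
  assumes "a \<in> A" "b \<in> A"
  shows "shift (a \<odot> b) = shift a \<oplus> shift b"
proof -
  have "lam (a \<odot> b) base = lam a (base \<oplus> shift b)"
    using assms by (simp only: lam_circ base_carrier lam_base)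
  also have "\<dots> = base \<oplus> shift a \<oplus> shift b"
    using assms by (simp add: lam_add lam_base lam_lambda_fixed shift_lambda_fixed)
  finally show ?thesis
    using assms by (simp add: shift_def P.m_assoc)
qed

lemma shift_add_lambda_fixed:
  "a \<in> A \<Longrightarrow> f \<in> lambda_fixed \<Longrightarrow> shift (a \<oplus> f) = shift a \<oplus> shift f"
  by (simp add: shift_circ lambda_fixed_carrier flip: circ_lambda_fixed)

lemma shift_zero [simp]: "shift \<zero> = \<zero>"
  by (simp add: shift_def)

lemma shift_surj: "f \<in> lambda_fixed \<Longrightarrow> \<exists>a\<in>A. shift a = f"
proof -
  assume f: "f \<in> lambda_fixed"
  have "base \<oplus> f \<in> lambda_orbit P M base"
    using lambda_moved_add_fixed[OF base_lambda_moved f]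
    by (simp add: lambda_orbit_lambda_moved[OF base_lambda_moved])
  then obtain a where "a \<in> A" "lam a base = base \<oplus> f"
    by (auto simp: lambda_orbit_eq)
  moreover from this have "shift a = f"
    using f lambda_fixed_carrier by (simp add: shift_def)
  ultimately show ?thesis by blast
qed

lemma lambda_fixed_add_self: "f \<in> lambda_fixed \<Longrightarrow> f \<oplus> f = \<zero>"
proof -
  assume f: "f \<in> lambda_fixed"
  obtain a where a: "a \<in> A" "shift a = f" using shift_surj[OF f] by blast
  have fA: "f \<in> A" using f lambda_fixed_carrier by blast
  have "base \<oplus> base = lam a (base \<oplus> base)"
    using a add_self_lambda_fixed[OF base_lambda_moved] by (simp add: lam_lambda_fixed)
  also have "\<dots> = (base \<oplus> base) \<oplus> (f \<oplus> f)"
    using a fA by (simp add: lam_add lam_base P.m_ac)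
  finally show ?thesis using fA by simp
qed

lemma shift_shift: "f \<in> lambda_fixed \<Longrightarrow> shift (shift f) = \<zero>"
proof -
  assume f: "f \<in> lambda_fixed"
  have fA: "f \<in> A" and sf: "shift f \<in> lambda_fixed"
    using f lambda_fixed_carrier shift_lambda_fixed by auto
  have "shift f \<oplus> shift base = shift (f \<odot> base)"
    using fA by (simp add: shift_circ)
  also have "\<dots> = shift (base \<oplus> (f \<oplus> shift f))"
    using fA base_lambda_moved by (simp add: circ_lambda_moved P.m_ac)
  also have "\<dots> = shift base \<oplus> (shift f \<oplus> shift (shift f))"
    using f sf fA subgroup.m_closed[OF lambda_fixed_subgroup]
    by (simp add: shift_add_lambda_fixed)
  finally show ?thesis
    using fA sf lambda_fixed_carrier by (simp add: P.m_ac)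
qed

lemma shift_lambda_fixed_cases:
  assumes x: "x \<in> lambda_moved" and g: "g \<in> lambda_fixed"
  shows "shift g = \<zero> \<or> shift g = shift (shift x)"
proof -
  obtain a where a: "a \<in> A" and g_eq: "g = shift a"
    using shift_surj[OF g] by metis
  from x a show ?thesis
  proof (cases rule: lambda_moved_cases)
    case fixed
    thus ?thesis by (simp add: g_eq shift_shift)
  next
    case (coset f)
    have "g = shift x \<oplus> shift f"
      using coset x by (simp add: g_eq shift_add_lambda_fixed lambda_moved_carrier)
    hence "shift g = shift (shift x) \<oplus> shift (shift f)"
      using coset x
      by (simp add: shift_add_lambda_fixed shift_lambda_fixed lambda_moved_carrier lambda_fixed_carrier)
    thus ?thesis
      using coset x by (simp add: shift_shift shift_lambda_fixed lambda_moved_carrier)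
  qed
qed

lemma lambda_fixed_subset_shifts:
  assumes x: "x \<in> lambda_moved"
  shows "lambda_fixed \<subseteq> {\<zero>, shift (shift x), shift x, shift x \<oplus> shift (shift x)}"
proof
  fix g assume g: "g \<in> lambda_fixed"
  obtain a where a: "a \<in> A" and g_eq: "g = shift a"
    using shift_surj[OF g] by metis
  from x a show "g \<in> {\<zero>, shift (shift x), shift x, shift x \<oplus> shift (shift x)}"
  proof (cases rule: lambda_moved_cases)
    case fixed
    thus ?thesis using shift_lambda_fixed_cases[OF x fixed] unfolding g_eq by blast
  next
    case (coset f)
    have "g = shift x \<oplus> shift f"
      using coset x by (simp add: g_eq shift_add_lambda_fixed lambda_moved_carrier)
    thus ?thesis
      using shift_lambda_fixed_cases[OF x coset(1)] x lambda_moved_carrier by auto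
  qed
qed

lemma shift_add_self:
  assumes x: "x \<in> lambda_moved"
  shows "shift (x \<oplus> x) = shift (shift x)"
proof -
  have xA: "x \<in> A" using x lambda_moved_carrier by blast
  have ssx: "shift (shift x) \<in> A" "shift (shift x) \<oplus> shift (shift x) = \<zero>"
    using xA shift_lambda_fixed lambda_fixed_add_self by simp_all
  have "\<zero> = shift x \<oplus> shift x"
    using xA shift_lambda_fixed lambda_fixed_add_self by simp
  also have "\<dots> = shift (x \<oplus> x \<oplus> shift x)"
    using x xA by (simp add: shift_circ flip: circ_lambda_moved)
  also have "\<dots> = shift (x \<oplus> x) \<oplus> shift (shift x)"
    using xA by (simp add: shift_add_lambda_fixed shift_lambda_fixed)
  finally have "shift (x \<oplus> x) \<oplus> shift (shift x) = \<zero>" ..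
  thus ?thesis using xA ssx by (metis P.inv_equality P.m_closed shift_closed)
qed

lemma lambda_fixed_eq_two:
  assumes x: "x \<in> lambda_moved" and w: "shift (shift x) = \<zero>"
  shows "lambda_fixed = {\<zero>, shift x}" and "shift x \<noteq> \<zero>"
proof -
  have xA: "x \<in> A" using x lambda_moved_carrier by blast
  show fixed_eq: "lambda_fixed = {\<zero>, shift x}"
    using lambda_fixed_subset_shifts[OF x] w xA shift_lambda_fixed subgroup.one_closed[OF lambda_fixed_subgroup]
    by (auto simp: lambda_fixed_def)
  have "1 < card lambda_fixed"
    using card_lambda_orbit_lambda_moved[OF x] lambda_orbit_lambda_moved[OF x] card_lambda_moved_eq
    by simp
  thus "shift x \<noteq> \<zero>" by (auto simp: fixed_eq)
qed

lemma lambda_fixed_eq_four: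
  assumes x: "x \<in> lambda_moved" and w: "shift (shift x) \<noteq> \<zero>"
  shows "lambda_fixed = {\<zero>, shift (shift x), shift x, shift x \<oplus> shift (shift x)}" (is "_ = ?F")
    and "card lambda_fixed = 4"
proof -
  have xA: "x \<in> A" using x lambda_moved_carrier by blast
  have v: "shift x \<in> lambda_fixed" and w_fixed: "shift (shift x) \<in> lambda_fixed"
    using xA shift_lambda_fixed by auto
  have vw: "shift x \<oplus> shift (shift x) \<in> lambda_fixed"
    using v w_fixed subgroup.m_closed[OF lambda_fixed_subgroup] by blast
  show fixed_eq: "lambda_fixed = ?F"
    using lambda_fixed_subset_shifts[OF x] v w_fixed vw subgroup.one_closed[OF lambda_fixed_subgroup]
    by blast
  have shift_vw: "shift (shift x \<oplus> shift (shift x)) = shift (shift x)"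
    using xA v w_fixed by (simp add: shift_add_lambda_fixed shift_shift)
  have shift_w: "shift (shift (shift x)) = \<zero>"
    using v by (rule shift_shift)
  have "shift x \<noteq> \<zero>" "shift x \<noteq> shift (shift x)" "shift x \<oplus> shift (shift x) \<noteq> \<zero>"
    "shift x \<oplus> shift (shift x) \<noteq> shift (shift x)" "shift x \<oplus> shift (shift x) \<noteq> shift x"
    using w shift_w shift_vw xA by (metis shift_zero, metis, metis shift_zero, metis, simp)
  thus "card lambda_fixed = 4"
    using w by (simp add: fixed_eq)
qed

lemma exists_add_self_eq_shift:
  assumes x: "x \<in> lambda_moved" and w: "shift (shift x) \<noteq> \<zero>"
  shows "\<exists>y\<in>lambda_moved. y \<oplus> y = shift y \<and> shift (shift y) \<noteq> \<zero>"
proof -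
  have xA: "x \<in> A" using x lambda_moved_carrier by blast
  have v: "shift x \<in> lambda_fixed" and w_fixed: "shift (shift x) \<in> lambda_fixed"
    using xA shift_lambda_fixed by auto
  have "x \<oplus> x \<in> {\<zero>, shift (shift x), shift x, shift x \<oplus> shift (shift x)}"
    using add_self_lambda_fixed[OF x] lambda_fixed_subset_shifts[OF x] by blast
  moreover have "x \<oplus> x \<noteq> \<zero>" "x \<oplus> x \<noteq> shift (shift x)"
    using shift_add_self[OF x] shift_shift[OF v] w by (metis shift_zero, metis)
  ultimately consider "x \<oplus> x = shift x" | "x \<oplus> x = shift x \<oplus> shift (shift x)"
    by blast
  thus ?thesis
  proof cases
    case 1
    thus ?thesis using x w by blast
  next
    case 2
    have y: "x \<oplus> shift x \<in> lambda_moved"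
      using lambda_moved_add_fixed[OF x v] .
    have "shift (x \<oplus> shift x) = shift x \<oplus> shift (shift x)"
      using xA v by (simp add: shift_add_lambda_fixed)
    moreover have "shift (shift x \<oplus> shift (shift x)) = shift (shift x)"
      using xA v w_fixed by (simp add: shift_add_lambda_fixed shift_shift)
    moreover have "(x \<oplus> shift x) \<oplus> (x \<oplus> shift x) = x \<oplus> x"
      using xA lambda_fixed_add_self[OF v] by (simp add: P.m_ac)
    ultimately show ?thesis using y w 2 by metis
  qed
qed

text \<open>On a model \<open>(Q, Qc)\<close>, \<open>moved\<close> and \<open>s\<close> stand for \<open>lambda_moved\<close> and \<open>shift\<close>
  pulled back along \<open>g\<close>, so only additive identities remain to be checked.\<close>
lemma brace_iso_by_shift:
  fixes Q Qc :: "'b monoid" and g :: "'b \<Rightarrow> 'a" and moved :: "'b \<Rightarrow> bool" and s :: "'b \<Rightarrow> 'a"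
  assumes finite: "finite (carrier Q)" and card: "card (carrier Q) = card A"
    and image: "g ` carrier Q = A"
    and add: "\<And>p q. p \<in> carrier Q \<Longrightarrow> q \<in> carrier Q \<Longrightarrow>
        p \<otimes>\<^bsub>Q\<^esub> q \<in> carrier Q \<and> g (p \<otimes>\<^bsub>Q\<^esub> q) = g p \<oplus> g q"
    and circ: "\<And>p q. p \<in> carrier Q \<Longrightarrow> q \<in> carrier Q \<Longrightarrow>
        p \<otimes>\<^bsub>Qc\<^esub> q \<in> carrier Q \<and> g (p \<otimes>\<^bsub>Qc\<^esub> q) = g p \<oplus> g q \<oplus> (if moved q then s p else \<zero>)"
    and moved: "\<And>q. q \<in> carrier Q \<Longrightarrow> moved q \<longleftrightarrow> g q \<in> lambda_moved"
    and shift: "\<And>p. p \<in> carrier Q \<Longrightarrow> shift (g p) = s p"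
  shows "brace_iso P M Q Qc"
proof (rule brace_isoI_inverse)
  show "bij_betw g (carrier Q) A"
    using image card finite by (simp add: bij_betw_def eq_card_imp_inj_on)
  show "p \<otimes>\<^bsub>Q\<^esub> q \<in> carrier Q \<and> g (p \<otimes>\<^bsub>Q\<^esub> q) = g p \<oplus> g q"
    if "p \<in> carrier Q" "q \<in> carrier Q" for p q
    using add that .
  show "p \<otimes>\<^bsub>Qc\<^esub> q \<in> carrier Q \<and> g (p \<otimes>\<^bsub>Qc\<^esub> q) = g p \<odot> g q"
    if p: "p \<in> carrier Q" and q: "q \<in> carrier Q" for p q
  proof -
    have gA: "g p \<in> A" "g q \<in> A" using p q image by auto
    show ?thesis
    proof (cases "moved q")
      case True
      thus ?thesis
        using circ[OF p q] moved[OF q] shift[OF p] gA by (simp add: circ_lambda_moved)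
    next
      case False
      hence "g q \<in> lambda_fixed" using moved[OF q] gA by (simp add: lambda_moved_def)
      thus ?thesis
        using circ[OF p q] False gA by (simp add: circ_lambda_fixed)
    qed
  qed
qed

lemma brace_iso_B1:
  assumes x: "x \<in> lambda_moved" and w: "shift (shift x) = \<zero>" and xx: "x \<oplus> x = shift x"
  shows "brace_iso P M B1_add B1_circ"
proof -
  define e where "e = shift x"
  have xA: "x \<in> A" and eA: "e \<in> A" and e_fixed: "e \<in> lambda_fixed"
    using x lambda_moved_carrier shift_lambda_fixed by (auto simp: e_def)
  have fixed_eq: "lambda_fixed = {\<zero>, e}"
    using lambda_fixed_eq_two[OF x w] by (simp add: e_def)
  have e_ne: "e \<noteq> \<zero>"
    using lambda_fixed_eq_two[OF x w] by (simp add: e_def)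
  have shift_e: "shift e = \<zero>" using w by (simp add: e_def)
  have shift_xe: "shift (x \<oplus> e) = e"
    using xA e_fixed shift_e by (simp add: shift_add_lambda_fixed e_def)
  have xe_moved: "x \<oplus> e \<in> lambda_moved"
    using lambda_moved_add_fixed[OF x e_fixed] .
  have "A = lambda_fixed \<union> (\<oplus>) x ` lambda_fixed"
    by (rule carrier_eq_fixed_union_coset[OF x])
  also have "\<dots> = {\<zero>, e, x, x \<oplus> e}"
    using xA by (auto simp: fixed_eq)
  finally have carrier_A: "A = {\<zero>, e, x, x \<oplus> e}" .
  have r1: "x \<oplus> x = e" "\<And>z. z \<in> A \<Longrightarrow> x \<oplus> (x \<oplus> z) = e \<oplus> z"
    using xx xA by (simp_all add: e_def P.m_assoc[symmetric])
  have r2: "e \<oplus> e = \<zero>" "\<And>z. z \<in> A \<Longrightarrow> e \<oplus> (e \<oplus> z) = z"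
    using lambda_fixed_add_self[OF e_fixed] eA by (simp_all add: P.m_assoc[symmetric])
  note rules = r1 r2 xA eA P.m_ac
  define g where "g j = (if j = (0::int) then \<zero> else if j = 1 then x else if j = 2 then e else x \<oplus> e)" for j
  have carrier_B: "carrier B1_add = {0, 1, 2, 3}"
    by (simp add: B1_add_def int_atLeastAtMost_0_1 int_atLeastAtMost_0_3)
  have add: "\<forall>p\<in>carrier B1_add. \<forall>q\<in>carrier B1_add. p \<otimes>\<^bsub>B1_add\<^esub> q \<in> carrier B1_add \<and>
      g (p \<otimes>\<^bsub>B1_add\<^esub> q) = g p \<oplus> g q"
    unfolding carrier_B by (simp add: B1_add_def g_def rules)
  have circ: "\<forall>p\<in>carrier B1_add. \<forall>q\<in>carrier B1_add. p \<otimes>\<^bsub>B1_circ\<^esub> q \<in> carrier B1_add \<and>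
      g (p \<otimes>\<^bsub>B1_circ\<^esub> q) = g p \<oplus> g q \<oplus> (if q \<in> {1, 3} then (if p \<in> {1, 3} then e else \<zero>) else \<zero>)"
    unfolding carrier_B by (simp add: B1_add_def B1_circ_def g_def rules)
  show ?thesis
  proof (rule brace_iso_by_shift[where g = g and moved = "\<lambda>j. j \<in> {1, 3}"
        and s = "\<lambda>j. if j \<in> {1, 3} then e else \<zero>"])
    show "card (carrier B1_add) = card A"
      using card_carrier_eq e_ne by (simp add: carrier_B fixed_eq)
    show "g ` carrier B1_add = A"
      unfolding carrier_A using xA eA by (auto simp: carrier_B g_def)
    show "q \<in> carrier B1_add \<Longrightarrow> q \<in> {1, 3} \<longleftrightarrow> g q \<in> lambda_moved" for q
      using x xe_moved by (auto simp: carrier_B g_def lambda_moved_def fixed_eq)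
    show "p \<in> carrier B1_add \<Longrightarrow> shift (g p) = (if p \<in> {1, 3} then e else \<zero>)" for p
      using shift_e shift_xe by (auto simp: carrier_B g_def e_def)
    show "finite (carrier B1_add)" by (simp add: carrier_B)
  qed (use add circ in blast)+
qed

lemma brace_iso_B2:
  assumes x: "x \<in> lambda_moved" and w: "shift (shift x) = \<zero>" and xx: "x \<oplus> x = \<zero>"
  shows "brace_iso P M B2_add B2_circ"
proof -
  define e where "e = shift x"
  have xA: "x \<in> A" and eA: "e \<in> A" and e_fixed: "e \<in> lambda_fixed"
    using x lambda_moved_carrier shift_lambda_fixed by (auto simp: e_def)
  have fixed_eq: "lambda_fixed = {\<zero>, e}"
    using lambda_fixed_eq_two[OF x w] by (simp add: e_def)
  have e_ne: "e \<noteq> \<zero>"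
    using lambda_fixed_eq_two[OF x w] by (simp add: e_def)
  have shift_e: "shift e = \<zero>" using w by (simp add: e_def)
  have shift_xe: "shift (x \<oplus> e) = e"
    using xA e_fixed shift_e by (simp add: shift_add_lambda_fixed e_def)
  have xe_moved: "x \<oplus> e \<in> lambda_moved"
    using lambda_moved_add_fixed[OF x e_fixed] .
  have "A = lambda_fixed \<union> (\<oplus>) x ` lambda_fixed"
    by (rule carrier_eq_fixed_union_coset[OF x])
  also have "\<dots> = {\<zero>, e, x, x \<oplus> e}"
    using xA by (auto simp: fixed_eq)
  finally have carrier_A: "A = {\<zero>, e, x, x \<oplus> e}" .
  have r1: "x \<oplus> x = \<zero>" "\<And>z. z \<in> A \<Longrightarrow> x \<oplus> (x \<oplus> z) = z"
    using xx xA by (simp_all add: P.m_assoc[symmetric])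
  have r2: "e \<oplus> e = \<zero>" "\<And>z. z \<in> A \<Longrightarrow> e \<oplus> (e \<oplus> z) = z"
    using lambda_fixed_add_self[OF e_fixed] eA by (simp_all add: P.m_assoc[symmetric])
  note rules = r1 r2 xA eA P.m_ac
  define g where "g = (\<lambda>(i::int, j::int). (if j = 1 then x else \<zero>) \<oplus> (if i = 1 then e else \<zero>))"
  define moved where "moved = (\<lambda>(i::int, j::int). j = 1)"
  define s where "s = (\<lambda>(i::int, j::int). if j = 1 then e else \<zero>)"
  have carrier_B: "carrier B2_add = {0, 1} \<times> {0, 1}"
    by (simp add: B2_add_def int_atLeastAtMost_0_1 int_atLeastAtMost_0_3)
  have add: "\<forall>i\<in>{0, 1}. \<forall>j\<in>{0, 1}. \<forall>i'\<in>{0, 1}. \<forall>j'\<in>{0, 1}.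
      (i, j) \<otimes>\<^bsub>B2_add\<^esub> (i', j') \<in> carrier B2_add \<and>
      g ((i, j) \<otimes>\<^bsub>B2_add\<^esub> (i', j')) = g (i, j) \<oplus> g (i', j')"
    unfolding carrier_B by (simp add: B2_add_def g_def rules)
  have circ: "\<forall>i\<in>{0, 1}. \<forall>j\<in>{0, 1}. \<forall>i'\<in>{0, 1}. \<forall>j'\<in>{0, 1}.
      (i, j) \<otimes>\<^bsub>B2_circ\<^esub> (i', j') \<in> carrier B2_add \<and>
      g ((i, j) \<otimes>\<^bsub>B2_circ\<^esub> (i', j'))
        = g (i, j) \<oplus> g (i', j') \<oplus> (if moved (i', j') then s (i, j) else \<zero>)"
    unfolding carrier_B by (simp add: B2_add_def B2_circ_def g_def moved_def s_def rules)
  show ?thesis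
  proof (rule brace_iso_by_shift[where g = g and moved = moved and s = s])
    show "finite (carrier B2_add)" by (simp add: carrier_B)
    show "card (carrier B2_add) = card A"
      using card_carrier_eq e_ne by (simp add: carrier_B fixed_eq)
    show "g ` carrier B2_add = A"
      unfolding carrier_A using xA eA by (auto simp: carrier_B g_def)
    show "q \<in> carrier B2_add \<Longrightarrow> moved q \<longleftrightarrow> g q \<in> lambda_moved" for q
      using x xe_moved xA eA by (auto simp: carrier_B g_def moved_def lambda_moved_def fixed_eq)
    show "p \<in> carrier B2_add \<Longrightarrow> shift (g p) = s p" for p
      using shift_e shift_xe xA eA by (auto simp: carrier_B g_def s_def e_def)
    show "p \<in> carrier B2_add \<Longrightarrow> q \<in> carrier B2_add \<Longrightarrow>
        p \<otimes>\<^bsub>B2_add\<^esub> q \<in> carrier B2_add \<and> g (p \<otimes>\<^bsub>B2_add\<^esub> q) = g p \<oplus> g q" for p q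
      using add unfolding carrier_B by blast
    show "p \<in> carrier B2_add \<Longrightarrow> q \<in> carrier B2_add \<Longrightarrow>
        p \<otimes>\<^bsub>B2_circ\<^esub> q \<in> carrier B2_add \<and>
        g (p \<otimes>\<^bsub>B2_circ\<^esub> q) = g p \<oplus> g q \<oplus> (if moved q then s p else \<zero>)" for p q
      using circ unfolding carrier_B by blast
  qed
qed

lemma brace_iso_B3:
  assumes x: "x \<in> lambda_moved" and w: "shift (shift x) \<noteq> \<zero>" and xx: "x \<oplus> x = shift x"
  shows "brace_iso P M B3_add B3_circ"
proof -
  define v where "v = shift x"
  define u where "u = shift v"
  have xA: "x \<in> A" and v_fixed: "v \<in> lambda_fixed" and u_fixed: "u \<in> lambda_fixed"
    using x lambda_moved_carrier shift_lambda_fixed lambda_fixed_carrier by (auto simp: v_def u_def)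
  have vA: "v \<in> A" and uA: "u \<in> A" and vu_fixed: "v \<oplus> u \<in> lambda_fixed"
    using v_fixed u_fixed lambda_fixed_carrier subgroup.m_closed[OF lambda_fixed_subgroup] by auto
  have fixed_eq: "lambda_fixed = {\<zero>, u, v, v \<oplus> u}"
    using lambda_fixed_eq_four[OF x w] by (simp add: u_def v_def)
  have card_fixed: "card lambda_fixed = 4"
    using lambda_fixed_eq_four(2)[OF x w] .
  have shift_u: "shift u = \<zero>" using v_fixed by (simp add: u_def shift_shift)
  have shift_v: "shift v = u" by (simp add: u_def)
  have shift_vu: "shift (v \<oplus> u) = u"
    using vA uA u_fixed shift_u by (simp add: shift_add_lambda_fixed shift_v)
  have shift_xu: "shift (x \<oplus> u) = v"
    using xA u_fixed shift_u vA by (simp add: shift_add_lambda_fixed v_def)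
  have shift_xv: "shift (x \<oplus> v) = v \<oplus> u"
    using xA v_fixed by (simp add: shift_add_lambda_fixed u_def v_def)
  have shift_xvu: "shift (x \<oplus> v \<oplus> u) = v \<oplus> u"
    using xA vA uA u_fixed shift_xv shift_u by (simp add: shift_add_lambda_fixed)
  have xu_moved: "x \<oplus> u \<in> lambda_moved" and xv_moved: "x \<oplus> v \<in> lambda_moved"
    using lambda_moved_add_fixed[OF x] u_fixed v_fixed by auto
  have xvu_moved: "x \<oplus> v \<oplus> u \<in> lambda_moved"
    using lambda_moved_add_fixed[OF xv_moved u_fixed] .
  have "A = lambda_fixed \<union> (\<oplus>) x ` lambda_fixed"
    by (rule carrier_eq_fixed_union_coset[OF x])
  also have "\<dots> = {\<zero>, u, v, v \<oplus> u, x, x \<oplus> u, x \<oplus> v, x \<oplus> (v \<oplus> u)}"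
    using xA by (auto simp: fixed_eq)
  finally have carrier_A: "A = {\<zero>, u, v, v \<oplus> u, x, x \<oplus> u, x \<oplus> v, x \<oplus> (v \<oplus> u)}" .
  have r1: "x \<oplus> x = v" "\<And>z. z \<in> A \<Longrightarrow> x \<oplus> (x \<oplus> z) = v \<oplus> z"
    using xx xA by (simp_all add: P.m_assoc[symmetric] v_def)
  have r2: "u \<oplus> u = \<zero>" "\<And>z. z \<in> A \<Longrightarrow> u \<oplus> (u \<oplus> z) = z"
    using lambda_fixed_add_self[OF u_fixed] uA by (simp_all add: P.m_assoc[symmetric])
  have r3: "v \<oplus> v = \<zero>" "\<And>z. z \<in> A \<Longrightarrow> v \<oplus> (v \<oplus> z) = z"
    using lambda_fixed_add_self[OF v_fixed] vA by (simp_all add: P.m_assoc[symmetric])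
  note rules = r1 r2 r3 xA uA vA P.m_ac
  define X where "X j = (if j = (0::int) then \<zero> else if j = 1 then x else if j = 2 then v else x \<oplus> v)" for j
  define U where "U i = (if i = (1::int) then u else \<zero>)" for i
  define g where "g = (\<lambda>(i, j). X j \<oplus> U i)"
  define moved where "moved = (\<lambda>(i::int, j::int). j = 1 \<or> j = 3)"
  define s where "s = (\<lambda>(i::int, j::int). if j = 0 then \<zero> else if j = 1 then v else if j = 2 then u else v \<oplus> u)"
  have carrier_B: "carrier B3_add = {0, 1} \<times> {0, 1, 2, 3}"
    by (simp add: B3_add_def int_atLeastAtMost_0_1 int_atLeastAtMost_0_3)
  have add: "\<forall>i\<in>{0, 1}. \<forall>j\<in>{0, 1, 2, 3}. \<forall>i'\<in>{0, 1}. \<forall>j'\<in>{0, 1, 2, 3}.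
      (i, j) \<otimes>\<^bsub>B3_add\<^esub> (i', j') \<in> carrier B3_add \<and>
      g ((i, j) \<otimes>\<^bsub>B3_add\<^esub> (i', j')) = g (i, j) \<oplus> g (i', j')"
    unfolding carrier_B by (simp add: B3_add_def g_def X_def U_def rules)
  have circ: "\<forall>i\<in>{0, 1}. \<forall>j\<in>{0, 1, 2, 3}. \<forall>i'\<in>{0, 1}. \<forall>j'\<in>{0, 1, 2, 3}.
      (i, j) \<otimes>\<^bsub>B3_circ\<^esub> (i', j') \<in> carrier B3_add \<and>
      g ((i, j) \<otimes>\<^bsub>B3_circ\<^esub> (i', j'))
        = g (i, j) \<oplus> g (i', j') \<oplus> (if moved (i', j') then s (i, j) else \<zero>)"
    unfolding carrier_B
    by (simp add: B3_add_def B3_circ_def eps4_def g_def X_def U_def moved_def s_def rules)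
  show ?thesis
  proof (rule brace_iso_by_shift[where g = g and moved = moved and s = s])
    show "finite (carrier B3_add)" by (simp add: carrier_B)
    show "card (carrier B3_add) = card A"
      using card_carrier_eq card_fixed by (simp add: carrier_B)
    show "g ` carrier B3_add = A"
      unfolding carrier_A using xA uA vA by (auto simp: carrier_B g_def X_def U_def P.m_assoc)
    show "q \<in> carrier B3_add \<Longrightarrow> moved q \<longleftrightarrow> g q \<in> lambda_moved" for q
      using x xu_moved xv_moved xvu_moved xA uA vA
      by (auto simp: carrier_B g_def X_def U_def moved_def lambda_moved_def fixed_eq)
    show "p \<in> carrier B3_add \<Longrightarrow> shift (g p) = s p" for p
      using shift_u shift_v shift_vu shift_xu shift_xv shift_xvu xA uA vA
      by (auto simp: carrier_B g_def X_def U_def s_def v_def)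
    show "p \<in> carrier B3_add \<Longrightarrow> q \<in> carrier B3_add \<Longrightarrow>
        p \<otimes>\<^bsub>B3_add\<^esub> q \<in> carrier B3_add \<and> g (p \<otimes>\<^bsub>B3_add\<^esub> q) = g p \<oplus> g q" for p q
      using add unfolding carrier_B by blast
    show "p \<in> carrier B3_add \<Longrightarrow> q \<in> carrier B3_add \<Longrightarrow>
        p \<otimes>\<^bsub>B3_circ\<^esub> q \<in> carrier B3_add \<and>
        g (p \<otimes>\<^bsub>B3_circ\<^esub> q) = g p \<oplus> g q \<oplus> (if moved q then s p else \<zero>)" for p q
      using circ unfolding carrier_B by blast
  qed
qed

theorem classification:
  "brace_iso P M B1_add B1_circ \<or> brace_iso P M B2_add B2_circ \<or> brace_iso P M B3_add B3_circ"
proof (cases "shift (shift base) = \<zero>")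
  case True
  have "base \<oplus> base \<in> {\<zero>, shift base}"
    using add_self_lambda_fixed[OF base_lambda_moved] lambda_fixed_eq_two(1)[OF base_lambda_moved True]
    by simp
  thus ?thesis
    using brace_iso_B1[OF base_lambda_moved True] brace_iso_B2[OF base_lambda_moved True] by blast
next
  case False
  then obtain x where "x \<in> lambda_moved" "shift (shift x) \<noteq> \<zero>" "x \<oplus> x = shift x"
    using exists_add_self_eq_shift[OF base_lambda_moved] by blast
  thus ?thesis using brace_iso_B3 by blast
qed

end

theorem mainTheorem15:
  fixes P M :: "'a monoid"
  assumes "skew_brace P M"
    and "finite (carrier P)"
    and "comm_group P"
    and "card (Lambda_vertices P M) = 1"
  shows "brace_iso P M B1_add B1_circ \<or> brace_iso P M B2_add B2_circ \<or> brace_iso P M B3_add B3_circ"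
proof -
  interpret single_vertex_brace P M
    using assms by (simp add: single_vertex_brace_def single_vertex_brace_axioms_def skew_brace_pair_def)
  show ?thesis by (rule classification)
qed

end
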